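(* Consider the closed multi-class BCMP network model $\mathcal{Z}$ of an AMoD system described in the context, and suppose it is a feasible solution to the OSCARR problem. Then the condition $\gamma_i=\gamma_j$ for all $i,j\in\mathcal{S}$ is equivalent to \[ \widetilde{\lambda}_i=\sum_{k\in\mathcal{D}_i}\lambda^{(k)}_{s^{(k)}}\qquad\text{for all } i\in\mathcal{S}. \]
   Context: AMoD network model. There is a finite set $\mathcal{V}$ of road intersections (vertices), a finite set $\mathcal{S}$ of stations and a finite set $\mathcal{I}$ of road links. The set of queues is $\mathcal{N}=\mathcal{S}\cup\mathcal{I}$. Each queue $i$ is a directed edge with origin vertex $\mathrm{Parent}(i)$ and destination vertex $\mathrm{Child}(i)$; a station is an edge with $\mathrm{Parent}(i)=\mathrm{Child}(i)$. Stations are single-server first-come-first-served queues and road links are infinite-server queues. For a vertex $v$ put $\mathcal{W}_v=\{j\in\mathcal{N}:\mathrm{Parent}(j)=v\}$. Demands. There are customer classes $\mathcal{Q}$ and rebalancing classes $\mathcal{R}$, with $\mathcal{K}=\mathcal{Q}\cup\mathcal{R}$. Each class $k$ has an origin station $s^{(k)}$, a destination station $t^{(k)}\ne s^{(k)}$, and an arrival rate $\lambda^{(k)}$; the notation $\lambda^{(k)}_{s^{(k)}}$ also means $\lambda^{(k)}$. Customer rates are positive and given; rebalancing rates are decision variables. Let $\mathcal{O}_i=\{k:s^{(k)}=i\}$ and $\mathcal{D}_i=\{k:t^{(k)}=i\}$. Let $\widetilde{\lambda}_i=\sum_{k\in\mathcal{O}_i}\lambda^{(k)}$, and for $k'\in\mathcal{O}_i$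 let $\widetilde{p}^{(k')}_i=\lambda^{(k')}/\widetilde{\lambda}_i$. Routing. For each class $k$, routing probabilities $\alpha^{(k)}_{i,j}\ge0$ with $\sum_j\alpha^{(k)}_{i,j}=1$ are given. The routing matrix is \[ p_{i,k;j,k'}=\begin{cases}\alpha^{(k)}_{i,j} & \text{if } k=k',\ j\in\mathcal{W}_{\mathrm{Child}(i)},\ t^{(k)}\notin\mathcal{W}_{\mathrm{Child}(i)},\\ \widetilde{p}^{(k')}_j & \text{if } j=t^{(k)},\ t^{(k)}\in\mathcal{W}_{\mathrm{Child}(i)},\ k'\in\mathcal{O}_j,\\ 0 & \text{otherwise.}\end{cases} \] Throughputs. The relative throughputs $\pi_{i,k}$ solve $\pi_{i,k}=\sum_{k'}\sum_{j\in\mathcal{N}}\pi_{j,k'}p_{j,k';i,k}$. Put $\pi_i=\sum_k\pi_{i,k}$. The base service rate $\mu^o_i$ is $\widetilde{\lambda}_i$ for stations and $1/T_i$ for road links, where $T_i>0$ is the mean free-flow travel time. The relative utilization is $\gamma_i=\sum_k\pi_{i,k}/\mu^o_i$. Road link $i$ has nominal capacity $C_i$. Throughput with $m$ vehicles. Let $\Omega^*_m=\{x\in\mathbb{N}^N:\sum_ix_i=m\}$, $c_i(a)=1$ for $i\in\mathcal{S}$, and $c_i(a)=a$ for $i\in\mathcal{I}$. Define $G(m)=\sum_{\Omega^*_m}\prod_i\gamma_i^{x_i}/\prod_{a=1}^{x_i}c_i(a)$ and $\Lambda_i(m)=\pi_iG(m-1)/G(m)$. OSCARR problem (fleet size $m$).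 Choose $\{\lambda^{(r)}\}$ and $\{\alpha^{(k)}_{ij}\}$ to minimize $\sum_{i\in\mathcal{I}}\Lambda_i(m)T_i$ subject to: (i) $\gamma_i=\gamma_j$ for all $i,j\in\mathcal{S}$; (ii) $\Lambda_i(m)T_i\le C_i$ for $i\in\mathcal{I}$; (iii) $\pi_{s^{(k)},k}=\sum_{k'}\sum_{j\in\mathcal{N}}\pi_{j,k}p_{j,k;t^{(k)},k'}$ for all $k$; (iv) the traffic equations hold; (v) the $\alpha^{(k)}$ are stochastic; (vi) $\lambda^{(r)}\ge0$. A feasible solution satisfies (i)–(vi). *)

theory Defs
  imports Complex_Main
begin

text \<open>AMoD closed BCMP network model. Queues have type 'q, vertices 'v, classes 'c.
  N = S \<union> I is the set of queues, K = Q \<union> R the set of classes.\<close>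

definition W :: "'q set \<Rightarrow> ('q \<Rightarrow> 'v) \<Rightarrow> 'v \<Rightarrow> 'q set" where
  "W N Parent v = {j \<in> N. Parent j = v}"

definition Orig :: "'c set \<Rightarrow> ('c \<Rightarrow> 'q) \<Rightarrow> 'q \<Rightarrow> 'c set" where
  "Orig K s i = {k \<in> K. s k = i}"

definition Dest :: "'c set \<Rightarrow> ('c \<Rightarrow> 'q) \<Rightarrow> 'q \<Rightarrow> 'c set" where
  "Dest K t i = {k \<in> K. t k = i}"

definition lamt :: "'c set \<Rightarrow> ('c \<Rightarrow> 'q) \<Rightarrow> ('c \<Rightarrow> real) \<Rightarrow> 'q \<Rightarrow> real" where
  "lamt K s lam i = (\<Sum>k\<in>Orig K s i. lam k)"

definition ptil :: "'c set \<Rightarrow> ('c \<Rightarrow> 'q) \<Rightarrow> ('c \<Rightarrow> real) \<Rightarrow> 'c \<Rightarrow> 'q \<Rightarrow> real" where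
  "ptil K s lam k' j = lam k' / lamt K s lam j"

definition routing ::
  "'q set \<Rightarrow> 'c set \<Rightarrow> ('q \<Rightarrow> 'v) \<Rightarrow> ('q \<Rightarrow> 'v) \<Rightarrow> ('c \<Rightarrow> 'q) \<Rightarrow> ('c \<Rightarrow> 'q)
    \<Rightarrow> ('c \<Rightarrow> real) \<Rightarrow> ('c \<Rightarrow> 'q \<Rightarrow> 'q \<Rightarrow> real) \<Rightarrow> 'q \<Rightarrow> 'c \<Rightarrow> 'q \<Rightarrow> 'c \<Rightarrow> real" where
  "routing N K Parent Child s t lam alpha i k j k' =
     (if k = k' \<and> j \<in> W N Parent (Child i) \<and> t k \<notin> W N Parent (Child i) then alpha k i j
      else if j = t k \<and> t k \<in> W N Parent (Child i) \<and> k' \<in> Orig K s j then ptil K s lam k' j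
      else 0)"

definition traffic_eqs ::
  "'q set \<Rightarrow> 'c set \<Rightarrow> ('q \<Rightarrow> 'c \<Rightarrow> 'q \<Rightarrow> 'c \<Rightarrow> real) \<Rightarrow> ('q \<Rightarrow> 'c \<Rightarrow> real) \<Rightarrow> bool" where
  "traffic_eqs N K P thr =
     (\<forall>i\<in>N. \<forall>k\<in>K. thr i k = (\<Sum>k'\<in>K. \<Sum>j\<in>N. thr j k' * P j k' i k))"

definition total_thr :: "'c set \<Rightarrow> ('q \<Rightarrow> 'c \<Rightarrow> real) \<Rightarrow> 'q \<Rightarrow> real" where
  "total_thr K thr i = (\<Sum>k\<in>K. thr i k)"

definition mu0 :: "'q set \<Rightarrow> 'c set \<Rightarrow> ('c \<Rightarrow> 'q) \<Rightarrow> ('c \<Rightarrow> real) \<Rightarrow> ('q \<Rightarrow> real) \<Rightarrow> 'q \<Rightarrow> real" where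
  "mu0 S K s lam T i = (if i \<in> S then lamt K s lam i else 1 / T i)"

definition gamma ::
  "'q set \<Rightarrow> 'c set \<Rightarrow> ('c \<Rightarrow> 'q) \<Rightarrow> ('c \<Rightarrow> real) \<Rightarrow> ('q \<Rightarrow> real) \<Rightarrow> ('q \<Rightarrow> 'c \<Rightarrow> real) \<Rightarrow> 'q \<Rightarrow> real" where
  "gamma S K s lam T thr i = total_thr K thr i / mu0 S K s lam T i"

definition Omega :: "'q set \<Rightarrow> nat \<Rightarrow> ('q \<Rightarrow> nat) set" where
  "Omega N m = {x. (\<forall>i. i \<notin> N \<longrightarrow> x i = 0) \<and> (\<Sum>i\<in>N. x i) = m}"

definition cfun :: "'q set \<Rightarrow> 'q \<Rightarrow> nat \<Rightarrow> real" where
  "cfun S i a = (if i \<in> S then 1 else real a)"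

definition Gnorm :: "'q set \<Rightarrow> 'q set \<Rightarrow> ('q \<Rightarrow> real) \<Rightarrow> nat \<Rightarrow> real" where
  "Gnorm N S gam m =
     (\<Sum>x\<in>Omega N m. \<Prod>i\<in>N. gam i ^ x i / (\<Prod>a\<in>{1..x i}. cfun S i a))"

definition Lambda :: "'q set \<Rightarrow> 'q set \<Rightarrow> 'c set \<Rightarrow> ('q \<Rightarrow> real) \<Rightarrow> ('q \<Rightarrow> 'c \<Rightarrow> real)
    \<Rightarrow> nat \<Rightarrow> 'q \<Rightarrow> real" where
  "Lambda N S K gam thr m i = total_thr K thr i * Gnorm N S gam (m - 1) / Gnorm N S gam m"

end

theory Submission
  imports Defs
begin

text \<open>At a station \<open>i\<close> the traffic equations force class \<open>k\<close> to leave \<open>i = s k\<close> at rate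
  \<open>lam k * gamma i\<close>, and condition (iii) says that the same rate arrives at \<open>t k\<close>. Summing over
  the classes ending at \<open>i\<close> gives the balance equation
  \<open>gamma i * lamt i = (\<Sum>k\<in>Dest i. lam k * gamma (s k))\<close>, so equal utilizations force
  \<open>lamt i = (\<Sum>k\<in>Dest i. lam k)\<close>. Conversely, under this condition dividing every class by the
  utilization of its origin again solves the traffic equations, and uniqueness of the solution up
  to scaling makes all station utilizations equal.\<close>

text \<open>\<open>t k \<in> W N Parent (Child j)\<close> says that queue \<open>j\<close> ends where the destination station of \<open>k\<close>
  begins, so this is the class-\<open>k\<close> flow handed over to \<open>t k\<close>.\<close>
definition dest_arrivals ::
  "'q set \<Rightarrow> ('q \<Rightarrow> 'v) \<Rightarrow> ('q \<Rightarrow> 'v) \<Rightarrow> ('c \<Rightarrow> 'q) \<Rightarrow> ('q \<Rightarrow> 'c \<Rightarrow> real) \<Rightarrow> 'c \<Rightarrow> real" where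
  "dest_arrivals N Parent Child t f k = (\<Sum>j\<in>N. if t k \<in> W N Parent (Child j) then f j k else 0)"

lemma routing_into_station:
  assumes "alpha k' j i = 0" and "k \<in> K"
  shows "routing N K Parent Child s t lam alpha j k' i k =
    (if i = t k' \<and> t k' \<in> W N Parent (Child j) \<and> s k = i then ptil K s lam k i else 0)"
  using assms unfolding routing_def Orig_def by auto

lemma routing_other_class:
  assumes "k' \<noteq> k" and "t k' \<noteq> i"
  shows "routing N K Parent Child s t lam alpha j k' i k = 0"
  using assms unfolding routing_def by auto

lemma sum_ptil_Orig:
  assumes "lamt K s lam i \<noteq> 0"
  shows "(\<Sum>k\<in>Orig K s i. ptil K s lam k i) = 1"
  using assms unfolding ptil_def by (simp add: sum_divide_distrib[symmetric] lamt_def[symmetric])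

lemma routing_sum_into_station:
  assumes "finite K" and "k \<in> K" and no_route: "\<And>k' j. k' \<in> K \<Longrightarrow> j \<in> N \<Longrightarrow> alpha k' j i = 0"
  shows "(\<Sum>k'\<in>K. \<Sum>j\<in>N. f j k' * routing N K Parent Child s t lam alpha j k' i k) =
    (if s k = i then ptil K s lam k i * (\<Sum>k'\<in>Dest K t i. dest_arrivals N Parent Child t f k') else 0)"
proof -
  have "(\<Sum>k'\<in>K. \<Sum>j\<in>N. f j k' * routing N K Parent Child s t lam alpha j k' i k) =
      (\<Sum>k'\<in>K. if t k' = i then
         (if s k = i then ptil K s lam k i * dest_arrivals N Parent Child t f k' else 0) else 0)"
    by (intro sum.cong refl)
      (auto simp: routing_into_station no_route assms(2) dest_arrivals_def sum_distrib_left
            intro!: sum.cong)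
  also have "\<dots> = (if s k = i then
      ptil K s lam k i * (\<Sum>k'\<in>Dest K t i. dest_arrivals N Parent Child t f k') else 0)"
    by (simp add: Dest_def sum.inter_filter[OF \<open>finite K\<close>] sum_distrib_left if_distrib
        cong: if_cong)
  finally show ?thesis .
qed

lemma routing_sum_off_destinations:
  assumes "finite K" and "k \<in> K" and "\<And>k'. k' \<in> K \<Longrightarrow> t k' \<noteq> i"
  shows "(\<Sum>k'\<in>K. \<Sum>j\<in>N. f j k' * routing N K Parent Child s t lam alpha j k' i k) =
    (\<Sum>j\<in>N. f j k * routing N K Parent Child s t lam alpha j k i k)"
proof -
  have "(\<Sum>k'\<in>K - {k}. \<Sum>j\<in>N. f j k' * routing N K Parent Child s t lam alpha j k' i k) = 0"
    using assms(3) by (intro sum.neutral ballI) (simp add: routing_other_class)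
  then show ?thesis
    by (simp add: sum.remove[OF assms(1,2)])
qed

locale station_flow =
  fixes N S :: "'q set" and K :: "'c set" and Parent Child :: "'q \<Rightarrow> 'v"
    and s t :: "'c \<Rightarrow> 'q" and lam :: "'c \<Rightarrow> real" and alpha :: "'c \<Rightarrow> 'q \<Rightarrow> 'q \<Rightarrow> real"
    and T :: "'q \<Rightarrow> real" and thr :: "'q \<Rightarrow> 'c \<Rightarrow> real"
  assumes finite_classes: "finite K"
    and stations_subset: "S \<subseteq> N"
    and origin_station: "k \<in> K \<Longrightarrow> s k \<in> S"
    and destination_station: "k \<in> K \<Longrightarrow> t k \<in> S"
    and no_route_into_stations: "k \<in> K \<Longrightarrow> j \<in> N \<Longrightarrow> i \<in> S \<Longrightarrow> alpha k j i = 0"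
    and traffic: "traffic_eqs N K (routing N K Parent Child s t lam alpha) thr"
    and completion: "k \<in> K \<Longrightarrow>
      thr (s k) k = (\<Sum>k'\<in>K. \<Sum>j\<in>N. thr j k * routing N K Parent Child s t lam alpha j k (t k) k')"
    and station_busy: "i \<in> S \<Longrightarrow> total_thr K thr i \<noteq> 0"
begin

abbreviation "P \<equiv> routing N K Parent Child s t lam alpha"
abbreviation "gam \<equiv> gamma S K s lam T thr"
abbreviation "arrivals f \<equiv> dest_arrivals N Parent Child t f"

lemma traffic_at_station:
  assumes "i \<in> S" and "k \<in> K" and "traffic_eqs N K P f"
  shows "f i k = (if s k = i then ptil K s lam k i * (\<Sum>k'\<in>Dest K t i. arrivals f k') else 0)"
proof -
  have "f i k = (\<Sum>k'\<in>K. \<Sum>j\<in>N. f j k' * P j k' i k)"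
    using assms stations_subset unfolding traffic_eqs_def by auto
  also have "\<dots> = (if s k = i then ptil K s lam k i * (\<Sum>k'\<in>Dest K t i. arrivals f k') else 0)"
    using assms(1,2) by (intro routing_sum_into_station finite_classes no_route_into_stations)
  finally show ?thesis .
qed

lemma lamt_station_nonzero:
  assumes "i \<in> S"
  shows "lamt K s lam i \<noteq> 0"
proof
  assume "lamt K s lam i = 0"
  then have "thr i k = 0" if "k \<in> K" for k
    using traffic_at_station[OF assms that traffic] by (simp add: ptil_def)
  then have "total_thr K thr i = 0" by (simp add: total_thr_def)
  with station_busy assms show False by blast
qed

lemma total_thr_station:
  assumes "i \<in> S"
  shows "total_thr K thr i = (\<Sum>k\<in>Dest K t i. arrivals thr k)"
proof -
  have "total_thr K thr i = (\<Sum>k\<in>Orig K s i. ptil K s lam k i) * (\<Sum>k\<in>Dest K t i. arrivals thr k)"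
    unfolding total_thr_def Orig_def sum_distrib_right
    by (simp add: traffic_at_station[OF assms _ traffic] sum.inter_filter[OF finite_classes]
        if_distrib cong: sum.cong)
  then show ?thesis
    using sum_ptil_Orig[OF lamt_station_nonzero[OF assms]] by simp
qed

lemma gamma_station: "i \<in> S \<Longrightarrow> gam i = total_thr K thr i / lamt K s lam i"
  by (simp add: gamma_def mu0_def)

lemma gamma_station_nonzero: "i \<in> S \<Longrightarrow> gam i \<noteq> 0"
  using gamma_station station_busy lamt_station_nonzero by simp

lemma thr_station:
  assumes "i \<in> S" and "k \<in> K"
  shows "thr i k = (if s k = i then lam k * gam i else 0)"
  using traffic_at_station[OF assms traffic] total_thr_station[OF assms(1)] gamma_station[OF assms(1)]
  by (simp add: ptil_def)

lemma arrivals_eq: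
  assumes "k \<in> K"
  shows "arrivals thr k = lam k * gam (s k)"
proof -
  have "thr (s k) k = (\<Sum>k'\<in>Orig K s (t k). ptil K s lam k' (t k)) * arrivals thr k"
  proof -
    have "thr (s k) k = (\<Sum>k'\<in>K. if s k' = t k then ptil K s lam k' (t k) * arrivals thr k else 0)"
      unfolding completion[OF assms] dest_arrivals_def
      by (intro sum.cong refl) (auto simp: routing_into_station no_route_into_stations
          destination_station assms sum_distrib_left intro!: sum.cong)
    then show ?thesis
      by (auto simp: Orig_def sum.inter_filter[OF finite_classes] sum_distrib_right intro!: sum.cong)
  qed
  then show ?thesis
    using sum_ptil_Orig[OF lamt_station_nonzero] thr_station origin_station destination_station assms
    by simp
qed

lemma balance_equation:
  assumes "i \<in> S"
  shows "gam i * lamt K s lam i = (\<Sum>k\<in>Dest K t i. lam k * gam (s k))"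
  using gamma_station[OF assms] lamt_station_nonzero[OF assms] total_thr_station[OF assms]
  by (simp add: arrivals_eq Dest_def)

lemma balanced_if_uniform_gamma:
  assumes uniform: "\<forall>i\<in>S. \<forall>j\<in>S. gam i = gam j" and "i \<in> S"
  shows "lamt K s lam i = (\<Sum>k\<in>Dest K t i. lam k)"
proof -
  have "gam i * lamt K s lam i = (\<Sum>k\<in>Dest K t i. lam k * gam (s k))"
    using balance_equation[OF \<open>i \<in> S\<close>] .
  also have "\<dots> = (\<Sum>k\<in>Dest K t i. gam i * lam k)"
  proof (rule sum.cong)
    fix k assume "k \<in> Dest K t i"
    then have "gam (s k) = gam i"
      using uniform \<open>i \<in> S\<close> origin_station unfolding Dest_def by blast
    then show "lam k * gam (s k) = gam i * lam k" by simp
  qed simp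
  also have "\<dots> = gam i * (\<Sum>k\<in>Dest K t i. lam k)"
    by (simp add: sum_distrib_left)
  finally show ?thesis
    using gamma_station_nonzero[OF \<open>i \<in> S\<close>] by simp
qed

lemma rescaled_traffic_eqs:
  assumes balanced: "\<And>i. i \<in> S \<Longrightarrow> lamt K s lam i = (\<Sum>k\<in>Dest K t i. lam k)"
  shows "traffic_eqs N K P (\<lambda>i k. thr i k / gam (s k))"
  unfolding traffic_eqs_def
proof (intro ballI)
  fix i k assume "i \<in> N" and "k \<in> K"
  define thr' where "thr' i k = thr i k / gam (s k)" for i k
  show "thr i k / gam (s k) = (\<Sum>k'\<in>K. \<Sum>j\<in>N. thr' j k' * P j k' i k)"
  proof (cases "i \<in> S")
    case True
    have "arrivals thr' k' = lam k'" if "k' \<in> K" for k'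
    proof -
      have "arrivals thr' k' = arrivals thr k' / gam (s k')"
        unfolding dest_arrivals_def thr'_def sum_divide_distrib by (intro sum.cong) auto
      then show ?thesis
        using arrivals_eq[OF that] gamma_station_nonzero[OF origin_station[OF that]] by simp
    qed
    then have "(\<Sum>k'\<in>K. \<Sum>j\<in>N. thr' j k' * P j k' i k) =
        (if s k = i then ptil K s lam k i * lamt K s lam i else 0)"
      using True \<open>k \<in> K\<close> balanced
      by (simp add: routing_sum_into_station finite_classes no_route_into_stations Dest_def)
    then show ?thesis
      using thr_station[OF True \<open>k \<in> K\<close>] gamma_station_nonzero[OF True]
        lamt_station_nonzero[OF True]
      by (simp add: ptil_def)
  next
    case False
    then have off: "\<And>k'. k' \<in> K \<Longrightarrow> t k' \<noteq> i"
      using destination_station by blast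
    have "thr i k = (\<Sum>k'\<in>K. \<Sum>j\<in>N. thr j k' * P j k' i k)"
      using traffic \<open>i \<in> N\<close> \<open>k \<in> K\<close> unfolding traffic_eqs_def by blast
    also have "\<dots> = (\<Sum>j\<in>N. thr j k * P j k i k)"
      using finite_classes \<open>k \<in> K\<close> off by (rule routing_sum_off_destinations)
    finally have "thr i k / gam (s k) = (\<Sum>j\<in>N. thr' j k * P j k i k)"
      by (simp add: thr'_def sum_divide_distrib)
    also have "\<dots> = (\<Sum>k'\<in>K. \<Sum>j\<in>N. thr' j k' * P j k' i k)"
      using finite_classes \<open>k \<in> K\<close> off by (rule routing_sum_off_destinations[symmetric])
    finally show ?thesis .
  qed
qed

lemma uniform_gamma_if_balanced:
  assumes balanced: "\<And>i. i \<in> S \<Longrightarrow> lamt K s lam i = (\<Sum>k\<in>Dest K t i. lam k)"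
    and unique: "\<forall>thr'. traffic_eqs N K P thr' \<longrightarrow> (\<exists>c. \<forall>i\<in>N. \<forall>k\<in>K. thr' i k = c * thr i k)"
  shows "\<forall>i\<in>S. \<forall>j\<in>S. gam i = gam j"
proof -
  obtain c where c: "\<forall>i\<in>N. \<forall>k\<in>K. thr i k / gam (s k) = c * thr i k"
    using unique[rule_format, OF rescaled_traffic_eqs[OF balanced]] by blast
  have "gam i = 1 / c" if "i \<in> S" for i
  proof -
    from station_busy[OF \<open>i \<in> S\<close>] obtain k where "k \<in> K" and "thr i k \<noteq> 0"
      unfolding total_thr_def by (metis sum.neutral)
    moreover from this have "s k = i"
      using thr_station[OF \<open>i \<in> S\<close>] by (auto split: if_splits)
    ultimately have "thr i k / gam i = c * thr i k"
      using c stations_subset \<open>i \<in> S\<close> by blast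
    then have "c * gam i = 1"
      using \<open>thr i k \<noteq> 0\<close> gamma_station_nonzero[OF \<open>i \<in> S\<close>] by (simp add: field_simps)
    then show ?thesis
      by (metis mult_zero_left nonzero_mult_div_cancel_left zero_neq_one)
  qed
  then show ?thesis by simp
qed

end

theorem lemma2:
  fixes V :: "'v set" and S I :: "'q set" and Parent Child :: "'q \<Rightarrow> 'v"
    and Q R :: "'c set" and s t :: "'c \<Rightarrow> 'q" and lam :: "'c \<Rightarrow> real"
    and alpha :: "'c \<Rightarrow> 'q \<Rightarrow> 'q \<Rightarrow> real" and T Cap :: "'q \<Rightarrow> real"
    and thr :: "'q \<Rightarrow> 'c \<Rightarrow> real" and m :: nat
  defines "N \<equiv> S \<union> I" and "K \<equiv> Q \<union> R"
  defines "P \<equiv> routing N K Parent Child s t lam alpha"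
  defines "gam \<equiv> gamma S K s lam T thr"
  assumes fin: "finite V" "finite S" "finite I" "S \<inter> I = {}" "finite Q" "finite R" "Q \<inter> R = {}"
    and edges: "\<forall>i\<in>N. Parent i \<in> V \<and> Child i \<in> V"
    and stations: "\<forall>i\<in>S. Parent i = Child i"
    and od: "\<forall>k\<in>K. s k \<in> S \<and> t k \<in> S \<and> s k \<noteq> t k"
    and cust_pos: "\<forall>k\<in>Q. lam k > 0"
    and T_pos: "\<forall>i\<in>I. T i > 0"
    and c_ii: "\<forall>i\<in>I. Lambda N S K gam thr m i * T i \<le> Cap i"
    and c_iii: "\<forall>k\<in>K. thr (s k) k = (\<Sum>k'\<in>K. \<Sum>j\<in>N. thr j k * P j k (t k) k')"
    and c_iv: "traffic_eqs N K P thr"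
    and c_v: "\<forall>k\<in>K. \<forall>i\<in>N. (\<forall>j\<in>N. alpha k i j \<ge> 0) \<and> (\<Sum>j\<in>N. alpha k i j) = 1"
    and c_vi: "\<forall>k\<in>R. lam k \<ge> 0"
    and no_route_into_stations: "\<forall>k\<in>K. \<forall>i\<in>N. \<forall>j\<in>S. alpha k i j = 0"
    and pi_nonneg: "\<forall>i\<in>N. \<forall>k\<in>K. thr i k \<ge> 0"
    and pi_station_pos: "\<forall>i\<in>S. total_thr K thr i > 0"
    and pi_unique: "\<forall>thr'. traffic_eqs N K P thr' \<longrightarrow> (\<exists>c. \<forall>i\<in>N. \<forall>k\<in>K. thr' i k = c * thr i k)"
  shows "(\<forall>i\<in>S. \<forall>j\<in>S. gam i = gam j) \<longleftrightarrow>
         (\<forall>i\<in>S. lamt K s lam i = (\<Sum>k\<in>Dest K t i. lam k))"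
proof -
  interpret station_flow N S K Parent Child s t lam alpha T thr
  proof
    show "finite K" using fin by (simp add: K_def)
    show "S \<subseteq> N" by (simp add: N_def)
    show "traffic_eqs N K (routing N K Parent Child s t lam alpha) thr"
      using c_iv by (simp add: P_def)
  qed (use od no_route_into_stations c_iii pi_station_pos in \<open>force simp: P_def\<close>)+
  show ?thesis
    using balanced_if_uniform_gamma uniform_gamma_if_balanced pi_unique
    unfolding gam_def P_def by blast
qed

end
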